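(* Let $\mu_{x_0}$ be the law of a self-adjoint $x_0\in\mathscr{A}^\Delta$, not a Dirac mass, with $\int_1^\infty\log x\,d\mu_{x_0}(x)<\infty$. Let $\alpha\ge0$, $\beta>0$, $s=\alpha+\beta$. Then for all $u_0\in\Lambda_{x_0,s}\cap\mathbb R$, \[f_{x_0,\alpha,\beta}''(u_0)=2\pi(\alpha-\beta)\,w_{s/2,s/2}'(u_0)=\frac{\alpha-\beta}{s}\psi_{x_0,s}''(u_0),\] where $w_{s/2,s/2}'(u_0)$ denotes the derivative with respect to $u$ at $u=u_0$ of the (vertically constant) density $w_{s/2,s/2}(u+iv)$ of the Brown measure of $x_0+c_s$ on $\Lambda_{x_0,s}$.
   Context: $G(z)=\int\frac{d\mu_{x_0}(x)}{z-x}$, $H_{x_0,r}(z)=z+rG(z)$. $v_{x_0,s}(u)=\inf\{v>0:\int\frac{d\mu_{x_0}(x)}{(u-x)^2+v^2}\le\frac1s\}$, $\Lambda_{x_0,s}=\{u+iv:|v|<v_{x_0,s}(u)\}$. $f_{x_0,\alpha,\beta}(u)=\mathrm{Re}[H_{x_0,\alpha-\beta}(u+iv_{x_0,s}(u))]$ and $\psi_{x_0,s}(u)=H_{x_0,s}(u+iv_{x_0,s}(u))$. $c_s=\tilde\sigma_{s/2}+i\sigma_{s/2}$ with $x_0,\tilde\sigma_{s/2},\sigma_{s/2}$ freely independent semicirculars of variance $s/2$; the Brown measure of $a\in\mathscr{A}^\Delta$ is $\frac1{4\pi}\Delta\lim_{\varepsilon\to0^+}\tau[\log((a-\lambda)^*(a-\lambda)+\varepsilon)]$,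 and that of $x_0+c_s$ has density $w_{s/2,s/2}(u+iv)=\frac{1}{2\pi s}\psi_{x_0,s}'(u)$ on $\Lambda_{x_0,s}$. *)

theory Defs
  imports "HOL-Probability.Probability"
begin

definition cauchy_G :: "real measure \<Rightarrow> complex \<Rightarrow> complex" where
  "cauchy_G mu z = (\<integral>x. 1 / (z - complex_of_real x) \<partial>mu)"

definition H_fun :: "real measure \<Rightarrow> real \<Rightarrow> complex \<Rightarrow> complex" where
  "H_fun mu r z = z + complex_of_real r * cauchy_G mu z"

definition v_fun :: "real measure \<Rightarrow> real \<Rightarrow> real \<Rightarrow> real" where
  "v_fun mu s u = Inf {v::real. 0 < v \<and> (\<integral>x. 1 / ((u - x)^2 + v^2) \<partial>mu) \<le> 1 / s}"

definition Lambda_set :: "real measure \<Rightarrow> real \<Rightarrow> complex set" where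
  "Lambda_set mu s = {z. \<bar>Im z\<bar> < v_fun mu s (Re z)}"

definition f_fun :: "real measure \<Rightarrow> real \<Rightarrow> real \<Rightarrow> real \<Rightarrow> real" where
  "f_fun mu \<alpha> \<beta> u = Re (H_fun mu (\<alpha> - \<beta>) (Complex u (v_fun mu (\<alpha> + \<beta>) u)))"

definition psi_fun :: "real measure \<Rightarrow> real \<Rightarrow> real \<Rightarrow> complex" where
  "psi_fun mu s u = H_fun mu s (Complex u (v_fun mu s u))"

text \<open>Density w_{s/2,s/2} of the Brown measure of x0 + c_s, as given in the context:
  (1/(2 pi s)) psi'_{x0,s}(u) on Lambda_{x0,s}, zero outside.\<close>
definition brown_density :: "real measure \<Rightarrow> real \<Rightarrow> complex \<Rightarrow> complex" where
  "brown_density mu s z =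
     (if z \<in> Lambda_set mu s
      then vector_derivative (psi_fun mu s) (at (Re z)) / complex_of_real (2 * pi * s)
      else 0)"

end

theory Submission
  imports Defs "HOL-Complex_Analysis.Cauchy_Integral_Formula"
begin

(* Write z(u) = u + i v(u) with v = v_{x0,s} and F(z) = \<integral> d\<mu>(x) / |z - x|^2 = - Im G(z) / Im z.
   Where v(u) > 0, the point z(u) solves F(z(u)) = 1/s, so Im H_s(z(u)) = v(u) (1 - s F(z(u))) = 0
   and \<psi> is real-valued near u0. Since F is strictly decreasing in Im z with negative partial
   derivative F_v, the map z \<mapsto> Re z + i F(z) is injective on the upper half plane with invertible
   derivative, and z(u) is the preimage of u + i/s. By the inverse function theorem z is
   differentiable with z' = 1 - i F_u / F_v, and \<psi>' = z' (1 + s G'(z)) is a differentiable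
   function of the point z(u), G being holomorphic; hence \<psi>'' exists and is real.
   On the curve Re G = (Re \<psi> - u) / s, so f(u) = u + (\<alpha> - \<beta>) / s (Re \<psi>(u) - u) and
   f'' = (\<alpha> - \<beta>) / s \<psi>''. Near the real axis the Brown density is \<psi>' / (2 \<pi> s), which gives the
   other identity. *)

lemma differentiable_Re [derivative_intros]:
  "f differentiable F \<Longrightarrow> (\<lambda>x. Re (f x)) differentiable F"
  unfolding differentiable_def using has_derivative_Re by blast

lemma differentiable_Im [derivative_intros]:
  "f differentiable F \<Longrightarrow> (\<lambda>x. Im (f x)) differentiable F"
  unfolding differentiable_def using has_derivative_Im by blast

lemma differentiable_of_real [derivative_intros]:
  "f differentiable F \<Longrightarrow> (\<lambda>x. complex_of_real (f x)) differentiable F"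
  unfolding differentiable_def using has_derivative_of_real by blast

lemma cauchy_kernel_quotient_eq:
  fixes z z0 w :: complex
  assumes "z \<noteq> w" "z0 \<noteq> w" "z \<noteq> z0"
  shows "(1 / (z - w) - 1 / (z0 - w)) / (z - z0) + 1 / (z0 - w)\<^sup>2 = (z - z0) / ((z - w) * (z0 - w)\<^sup>2)"
proof -
  have "(1 / a - 1 / b) / (a - b) + 1 / b\<^sup>2 = (a - b) / (a * b\<^sup>2)"
    if "a \<noteq> 0" "b \<noteq> 0" "a \<noteq> b" for a b :: complex
    using that by (simp add: field_simps power2_eq_square)
  from this[of "z - w" "z0 - w"] show ?thesis
    using assms by simp
qed

lemma Im_le_norm_diff_of_real: "Im z \<le> cmod (z - complex_of_real x)"
  using abs_Im_le_cmod[of "z - complex_of_real x"] by simp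

lemma norm_cauchy_kernel_quotient_le:
  assumes "0 < d" "d / 2 \<le> Im z" "d \<le> Im z0"
  shows "norm ((z - z0) / ((z - complex_of_real x) * (z0 - complex_of_real x)\<^sup>2))
           \<le> cmod (z - z0) * (2 / d ^ 3)"
proof -
  have near: "d / 2 \<le> cmod (z - complex_of_real x)" and far: "d \<le> cmod (z0 - complex_of_real x)"
    using Im_le_norm_diff_of_real[of z x] Im_le_norm_diff_of_real[of z0 x] assms by auto
  have "norm ((z - z0) / ((z - complex_of_real x) * (z0 - complex_of_real x)\<^sup>2))
      = cmod (z - z0) / (cmod (z - complex_of_real x) * cmod (z0 - complex_of_real x) ^ 2)"
    by (simp add: norm_divide norm_mult norm_power)
  also have "\<dots> \<le> cmod (z - z0) / (d / 2 * d ^ 2)"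
    using near far \<open>0 < d\<close> by (intro divide_left_mono mult_mono power_mono mult_pos_pos) auto
  also have "\<dots> = cmod (z - z0) * (2 / d ^ 3)"
    by (simp add: power2_eq_square power3_eq_cube)
  finally show ?thesis .
qed

lemma Inf_sublevel_set_eq_level_point:
  fixes g :: "real \<Rightarrow> real"
  assumes cont: "continuous_on {0<..} g"
    and decr: "\<And>a b. 0 < a \<Longrightarrow> a < b \<Longrightarrow> g b < g a"
    and w: "0 < w" "c < g w" and b: "0 < b" "g b \<le> c"
  shows "w < Inf {v. 0 < v \<and> g v \<le> c}" "g (Inf {v. 0 < v \<and> g v \<le> c}) = c"
proof -
  have "w \<le> b"
    using decr[of b w] w b by fastforce
  moreover have "continuous_on {w..b} g"
    using w by (intro continuous_on_subset[OF cont]) auto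
  ultimately obtain t where t: "w \<le> t" "t \<le> b" "g t = c"
    using IVT2'[of g b c w] w b by auto
  have "Inf {v. 0 < v \<and> g v \<le> c} = t"
  proof (rule cInf_eq_minimum)
    show "t \<in> {v. 0 < v \<and> g v \<le> c}"
      using t w by simp
    show "t \<le> x" if "x \<in> {v. 0 < v \<and> g v \<le> c}" for x
      using decr[of x t] that t by fastforce
  qed
  moreover have "w \<noteq> t"
    using t w by auto
  ultimately show "w < Inf {v. 0 < v \<and> g v \<le> c}" "g (Inf {v. 0 < v \<and> g v \<le> c}) = c"
    using t by auto
qed

lemma has_vector_derivative_Im_eq_0:
  fixes f :: "real \<Rightarrow> complex"
  assumes "(f has_vector_derivative D) (at x)" "\<forall>\<^sub>F y in nhds x. Im (f y) = 0"
  shows "Im D = 0"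
proof -
  have "((\<lambda>y. Im (f y)) has_real_derivative 0) (at x)"
    using DERIV_const DERIV_cong_ev[OF refl assms(2) refl] by auto
  with has_field_derivative_Im[OF assms(1)] show ?thesis
    by (rule DERIV_unique)
qed

lemma Re_inverse_square_diff_of_real:
  "Re (1 / (z - complex_of_real x)\<^sup>2) = ((Re z - x)\<^sup>2 - (Im z)\<^sup>2) / ((Re z - x)\<^sup>2 + (Im z)\<^sup>2)\<^sup>2"
proof -
  have "Re ((z - complex_of_real x)\<^sup>2) = (Re z - x)\<^sup>2 - (Im z)\<^sup>2"
    and "Im ((z - complex_of_real x)\<^sup>2) = 2 * (Re z - x) * Im z"
    and "((Re z - x)\<^sup>2 - (Im z)\<^sup>2)\<^sup>2 + (2 * (Re z - x) * Im z)\<^sup>2 = ((Re z - x)\<^sup>2 + (Im z)\<^sup>2)\<^sup>2"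
    by (simp_all add: power2_eq_square algebra_simps)
  then show ?thesis
    by (simp only: Re_divide) simp
qed

context prob_space
begin

lemma norm_integral_le_const:
  fixes f :: "'a \<Rightarrow> 'b::{banach,second_countable_topology}"
  assumes "integrable M f" "\<And>x. norm (f x) \<le> B"
  shows "norm (\<integral>x. f x \<partial>M) \<le> B"
proof -
  have "(\<integral>x. norm (f x) \<partial>M) \<le> B"
    using assms by (intro integral_le_const) auto
  then show ?thesis
    using integral_norm_bound[of M f] by linarith
qed

lemma integral_pos:
  fixes f :: "'a \<Rightarrow> real"
  assumes "integrable M f" "\<And>x. 0 < f x"
  shows "0 < (\<integral>x. f x \<partial>M)"
  using integral_less_AE_space[of "\<lambda>_. 0" f] assms emeasure_space_1 by simp

end

section \<open>The Cauchy transform on the upper half plane\<close>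

context real_distribution
begin

lemma integrable_cauchy_kernel_power:
  assumes "0 < Im z"
  shows "integrable M (\<lambda>x. 1 / (z - complex_of_real x) ^ n)"
proof (rule integrable_const_bound[where B = "1 / Im z ^ n"])
  show "AE x in M. norm (1 / (z - complex_of_real x) ^ n) \<le> 1 / Im z ^ n"
    using assms Im_le_norm_diff_of_real
    by (auto simp: norm_divide norm_power intro!: frac_le power_mono)
qed measurable

lemma cauchy_G_difference_quotient_bound:
  assumes "0 < Im z0" "dist z z0 < Im z0 / 2" "z \<noteq> z0"
  shows "norm ((cauchy_G M z - cauchy_G M z0) / (z - z0) + (\<integral>x. 1 / (z0 - complex_of_real x)\<^sup>2 \<partial>M))
           \<le> cmod (z - z0) * (2 / Im z0 ^ 3)"
proof -
  have "\<bar>Im z - Im z0\<bar> < Im z0 / 2"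
    using abs_Im_le_cmod[of "z - z0"] assms(2) by (simp add: dist_norm)
  then have "Im z0 / 2 \<le> Im z" "0 < Im z"
    by linarith+
  have "z \<noteq> complex_of_real x" "z0 \<noteq> complex_of_real x" for x
    using \<open>0 < Im z\<close> assms(1) by auto
  then have "(cauchy_G M z - cauchy_G M z0) / (z - z0) + (\<integral>x. 1 / (z0 - complex_of_real x)\<^sup>2 \<partial>M)
      = (\<integral>x. (z - z0) / ((z - complex_of_real x) * (z0 - complex_of_real x)\<^sup>2) \<partial>M)"
    using integrable_cauchy_kernel_power[of _ 1] integrable_cauchy_kernel_power[of _ 2]
      \<open>0 < Im z\<close> assms(1,3)
    by (simp add: cauchy_G_def integral_add integral_diff flip: cauchy_kernel_quotient_eq)
  also have "norm \<dots> \<le> cmod (z - z0) * (2 / Im z0 ^ 3)"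
    using norm_cauchy_kernel_quotient_le[OF assms(1) \<open>Im z0 / 2 \<le> Im z\<close> order_refl]
    by (intro norm_integral_le_const integrable_const_bound[where B = "cmod (z - z0) * (2 / Im z0 ^ 3)"])
      auto
  finally show ?thesis .
qed

lemma cauchy_G_has_field_derivative:
  assumes "0 < Im z0"
  shows "(cauchy_G M has_field_derivative - (\<integral>x. 1 / (z0 - complex_of_real x)\<^sup>2 \<partial>M)) (at z0)"
proof -
  define D where "D = - (\<integral>x. 1 / (z0 - complex_of_real x)\<^sup>2 \<partial>M)"
  have "((\<lambda>z. (cauchy_G M z - cauchy_G M z0) / (z - z0) - D) \<longlongrightarrow> 0) (at z0)"
  proof (rule Lim_null_comparison)
    show "\<forall>\<^sub>F z in at z0. norm ((cauchy_G M z - cauchy_G M z0) / (z - z0) - D)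
            \<le> cmod (z - z0) * (2 / Im z0 ^ 3)"
      unfolding eventually_at D_def using assms cauchy_G_difference_quotient_bound
      by (intro exI[of _ "Im z0 / 2"]) auto
    show "((\<lambda>z. cmod (z - z0) * (2 / Im z0 ^ 3)) \<longlongrightarrow> 0) (at z0)"
      by (intro tendsto_mult_left_zero tendsto_norm_zero LIM_zero tendsto_ident_at)
  qed
  then show ?thesis
    unfolding D_def[symmetric] by (simp add: has_field_derivative_iff LIM_zero_iff)
qed

lemma cauchy_G_holomorphic: "cauchy_G M holomorphic_on {z. 0 < Im z}"
  unfolding holomorphic_on_def field_differentiable_def
  using cauchy_G_has_field_derivative by (blast intro: has_field_derivative_at_within)

lemma deriv_cauchy_G:
  "0 < Im z \<Longrightarrow> deriv (cauchy_G M) z = - (\<integral>x. 1 / (z - complex_of_real x)\<^sup>2 \<partial>M)"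
  by (intro DERIV_imp_deriv cauchy_G_has_field_derivative)

lemma cauchy_G_differentiable: "0 < Im z \<Longrightarrow> cauchy_G M differentiable (at z)"
  by (intro field_differentiable_imp_differentiable holomorphic_on_imp_differentiable_at[OF cauchy_G_holomorphic])
    (auto simp: open_halfspace_Im_gt)

lemma deriv_cauchy_G_differentiable: "0 < Im z \<Longrightarrow> deriv (cauchy_G M) differentiable (at z)"
  using holomorphic_on_imp_differentiable_at[OF holomorphic_deriv[OF cauchy_G_holomorphic]]
  by (auto intro: field_differentiable_imp_differentiable simp: open_halfspace_Im_gt)

section \<open>The integral of 1 / |z - x|^2\<close>

definition inv_sqdist_integral :: "complex \<Rightarrow> real" where
  "inv_sqdist_integral z = (\<integral>x. 1 / ((Re z - x)\<^sup>2 + (Im z)\<^sup>2) \<partial>M)"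

definition inv_sqdist_integral_du :: "complex \<Rightarrow> real" where
  "inv_sqdist_integral_du z = - Im (deriv (cauchy_G M) z) / Im z"

definition inv_sqdist_integral_dv :: "complex \<Rightarrow> real" where
  "inv_sqdist_integral_dv z = - Re (deriv (cauchy_G M) z) / Im z + Im (cauchy_G M z) / (Im z)\<^sup>2"

lemma integrable_inv_sqdist_power:
  assumes "0 < v"
  shows "integrable M (\<lambda>x. 1 / ((u - x)\<^sup>2 + v\<^sup>2) ^ n)"
proof (rule integrable_const_bound[where B = "1 / (v\<^sup>2) ^ n"])
  show "AE x in M. norm (1 / ((u - x)\<^sup>2 + v\<^sup>2) ^ n) \<le> 1 / (v\<^sup>2) ^ n"
    using assms by (auto intro!: frac_le power_mono simp: add_pos_nonneg)
qed measurable

lemma inv_sqdist_integral_le: "0 < Im z \<Longrightarrow> inv_sqdist_integral z \<le> 1 / (Im z)\<^sup>2"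
  unfolding inv_sqdist_integral_def
  using integrable_inv_sqdist_power[of "Im z" "Re z" 1]
  by (intro integral_le_const) (auto intro!: frac_le simp: add_pos_nonneg)

lemma inv_sqdist_integral_strict_antimono:
  assumes "Re z1 = Re z2" "0 < Im z1" "Im z1 < Im z2"
  shows "inv_sqdist_integral z2 < inv_sqdist_integral z1"
  unfolding inv_sqdist_integral_def
proof (rule integral_less_AE_space)
  have "(Im z1)\<^sup>2 < (Im z2)\<^sup>2"
    using assms by (intro power_strict_mono) auto
  then show "AE x in M. 1 / ((Re z2 - x)\<^sup>2 + (Im z2)\<^sup>2) < 1 / ((Re z1 - x)\<^sup>2 + (Im z1)\<^sup>2)"
    using assms by (auto intro!: divide_strict_left_mono simp: add_nonneg_pos)
qed (use assms integrable_inv_sqdist_power[of _ _ 1] in \<open>auto simp: emeasure_space_1[simplified]\<close>)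

lemma inv_sqdist_integral_eq_Im_cauchy_G:
  assumes "0 < Im z"
  shows "inv_sqdist_integral z = - Im (cauchy_G M z) / Im z"
proof -
  have "Im (cauchy_G M z) = (\<integral>x. Im (1 / (z - complex_of_real x)) \<partial>M)"
    using integrable_cauchy_kernel_power[OF assms, of 1] by (simp add: cauchy_G_def)
  also have "\<dots> = (\<integral>x. - Im z * (1 / ((Re z - x)\<^sup>2 + (Im z)\<^sup>2)) \<partial>M)"
    by (simp add: Im_divide)
  also have "\<dots> = - Im z * inv_sqdist_integral z"
    unfolding inv_sqdist_integral_def by (rule integral_mult_right_zero)
  finally show ?thesis
    using assms by simp
qed

lemma has_derivative_inv_sqdist_integral:
  assumes "0 < Im z"
  shows "(inv_sqdist_integral has_derivative
           (\<lambda>h. Re h * inv_sqdist_integral_du z + Im h * inv_sqdist_integral_dv z)) (at z)"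
proof (rule has_derivative_transform_within_open[where s = "{z. 0 < Im z}"])
  have "(cauchy_G M has_derivative (\<lambda>h. deriv (cauchy_G M) z * h)) (at z)"
    using cauchy_G_has_field_derivative[OF assms, folded deriv_cauchy_G[OF assms]]
    by (simp add: has_field_derivative_def)
  then show "((\<lambda>z. - Im (cauchy_G M z) / Im z) has_derivative
           (\<lambda>h. Re h * inv_sqdist_integral_du z + Im h * inv_sqdist_integral_dv z)) (at z)"
    using assms
    by (auto intro!: derivative_eq_intros
        simp: inv_sqdist_integral_du_def inv_sqdist_integral_dv_def field_simps power2_eq_square)
qed (use assms inv_sqdist_integral_eq_Im_cauchy_G in \<open>auto simp: open_halfspace_Im_gt\<close>)

lemma inv_sqdist_integral_dv_eq:
  assumes "0 < Im z"
  shows "inv_sqdist_integral_dv z = - 2 * Im z * (\<integral>x. 1 / ((Re z - x)\<^sup>2 + (Im z)\<^sup>2)\<^sup>2 \<partial>M)"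
proof -
  define q where "q x = (Re z - x)\<^sup>2 + (Im z)\<^sup>2" for x
  have "0 < q x" for x
    using assms by (simp add: q_def add_nonneg_pos)
  have pointwise: "Re (1 / (z - complex_of_real x)\<^sup>2) - 1 / q x = - 2 * (Im z)\<^sup>2 * (1 / (q x)\<^sup>2)"
    for x
  proof -
    have "Re (1 / (z - complex_of_real x)\<^sup>2) = (q x - 2 * (Im z)\<^sup>2) / (q x)\<^sup>2"
      by (simp add: Re_inverse_square_diff_of_real q_def)
    then show ?thesis
      unfolding \<open>Re _ = _\<close> using \<open>0 < q x\<close> by (simp add: field_simps power2_eq_square)
  qed
  have "inv_sqdist_integral_dv z
      = ((\<integral>x. Re (1 / (z - complex_of_real x)\<^sup>2) \<partial>M) - inv_sqdist_integral z) / Im z"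
    using assms integrable_cauchy_kernel_power[OF assms, of 2]
    by (simp add: inv_sqdist_integral_dv_def deriv_cauchy_G inv_sqdist_integral_eq_Im_cauchy_G
        field_simps power2_eq_square)
  also have "\<dots> = (\<integral>x. Re (1 / (z - complex_of_real x)\<^sup>2) - 1 / q x \<partial>M) / Im z"
    using integrable_cauchy_kernel_power[OF assms, of 2] integrable_inv_sqdist_power[OF assms, of "Re z" 1]
    by (simp add: integral_diff inv_sqdist_integral_def q_def)
  also have "\<dots> = - 2 * (Im z)\<^sup>2 * (\<integral>x. 1 / (q x)\<^sup>2 \<partial>M) / Im z"
    by (simp only: pointwise integral_mult_right_zero)
  also have "\<dots> = - 2 * Im z * (\<integral>x. 1 / (q x)\<^sup>2 \<partial>M)"
    using assms by (simp add: power2_eq_square)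
  finally show ?thesis
    by (simp add: q_def)
qed

lemma inv_sqdist_integral_dv_neg: "0 < Im z \<Longrightarrow> inv_sqdist_integral_dv z < 0"
  using integral_pos[OF integrable_inv_sqdist_power[of "Im z" "Re z" 2]]
  by (simp add: inv_sqdist_integral_dv_eq add_nonneg_pos mult_pos_neg)

lemma inv_sqdist_integral_du_differentiable: "0 < Im z \<Longrightarrow> inv_sqdist_integral_du differentiable (at z)"
  unfolding inv_sqdist_integral_du_def[abs_def]
  by (intro derivative_intros deriv_cauchy_G_differentiable) auto

lemma inv_sqdist_integral_dv_differentiable: "0 < Im z \<Longrightarrow> inv_sqdist_integral_dv differentiable (at z)"
  unfolding inv_sqdist_integral_dv_def[abs_def]
  by (intro derivative_intros deriv_cauchy_G_differentiable cauchy_G_differentiable) auto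

lemma isCont_inv_sqdist_integral: "0 < Im z \<Longrightarrow> isCont inv_sqdist_integral z"
  using has_derivative_inv_sqdist_integral by (rule has_derivative_continuous)

section \<open>The boundary curve of Lambda\<close>

definition boundary_curve :: "real \<Rightarrow> real \<Rightarrow> complex" where
  "boundary_curve s u = Complex u (v_fun M s u)"

lemma inv_sqdist_integral_boundary_curve:
  assumes s: "0 < s" and w: "0 < w" "1 / s < inv_sqdist_integral (Complex u w)"
  shows "w < v_fun M s u" "inv_sqdist_integral (boundary_curve s u) = 1 / s"
proof -
  define g where "g v = inv_sqdist_integral (Complex u v)" for v
  have "isCont g v" if "0 < v" for v
    unfolding g_def Complex_eq using that
    by (intro isCont_o2[OF _ isCont_inv_sqdist_integral] continuous_intros) simp_all
  then have "continuous_on {0<..} g"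
    by (intro continuous_at_imp_continuous_on) auto
  moreover have "g (s + 1) \<le> 1 / s"
  proof -
    have "g (s + 1) \<le> 1 / (s + 1)\<^sup>2"
      using inv_sqdist_integral_le[of "Complex u (s + 1)"] s by (simp add: g_def)
    also have "\<dots> \<le> 1 / s"
      using s by (intro divide_left_mono) (auto simp: power2_eq_square algebra_simps add_pos_pos)
    finally show ?thesis .
  qed
  moreover have "v_fun M s u = Inf {v. 0 < v \<and> g v \<le> 1 / s}"
    by (simp add: v_fun_def g_def inv_sqdist_integral_def)
  ultimately show "w < v_fun M s u" "inv_sqdist_integral (boundary_curve s u) = 1 / s"
    using Inf_sublevel_set_eq_level_point[of g w "1 / s" "s + 1"] s w
      inv_sqdist_integral_strict_antimono[of "Complex u _" "Complex u _"]
    by (auto simp: g_def boundary_curve_def)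
qed

lemma eventually_v_fun_level:
  assumes s: "0 < s" and v: "0 < v_fun M s u0"
  shows "\<forall>\<^sub>F u in nhds u0. 0 < v_fun M s u \<and> inv_sqdist_integral (boundary_curve s u) = 1 / s"
proof -
  define w where "w = v_fun M s u0 / 2"
  have "0 < w"
    using v by (simp add: w_def)
  have "1 / s < inv_sqdist_integral (Complex u0 w)"
  proof (rule ccontr)
    assume "\<not> 1 / s < inv_sqdist_integral (Complex u0 w)"
    then have "v_fun M s u0 \<le> w"
      unfolding v_fun_def using \<open>0 < w\<close>
      by (intro cInf_lower) (auto simp: inv_sqdist_integral_def intro: bdd_belowI[of _ 0])
    then show False
      using v by (simp add: w_def)
  qed
  moreover have "isCont (\<lambda>u. inv_sqdist_integral (Complex u w)) u0"
    unfolding Complex_eq using \<open>0 < w\<close>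
    by (intro isCont_o2[OF _ isCont_inv_sqdist_integral] continuous_intros) simp_all
  ultimately have "\<forall>\<^sub>F u in nhds u0. 1 / s < inv_sqdist_integral (Complex u w)"
    by (auto dest: order_tendstoD(1) isContD[THEN tendsto_at_iff_tendsto_nhds[THEN iffD1]])
  then show ?thesis
    by eventually_elim (use inv_sqdist_integral_boundary_curve[OF s \<open>0 < w\<close>] \<open>0 < w\<close> in fastforce)
qed

definition level_map :: "complex \<Rightarrow> complex" where
  "level_map z = complex_of_real (Re z) + \<i> * complex_of_real (inv_sqdist_integral z)"

lemma inj_on_level_map: "inj_on level_map {z. 0 < Im z}"
proof (rule inj_onI)
  fix z1 z2
  assume z: "z1 \<in> {z. 0 < Im z}" "z2 \<in> {z. 0 < Im z}" "level_map z1 = level_map z2"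
  then have "Re z1 = Re z2" "inv_sqdist_integral z1 = inv_sqdist_integral z2"
    by (simp_all add: level_map_def complex_eq_iff)
  with z(1,2) have "Im z1 = Im z2"
    using inv_sqdist_integral_strict_antimono[of z1 z2] inv_sqdist_integral_strict_antimono[of z2 z1]
    by (cases "Im z1" "Im z2" rule: linorder_cases) auto
  with \<open>Re z1 = Re z2\<close> show "z1 = z2"
    by (simp add: complex_eq_iff)
qed

lemma has_derivative_level_map:
  assumes "0 < Im z"
  shows "(level_map has_derivative (\<lambda>h. complex_of_real (Re h) + \<i> * complex_of_real
           (Re h * inv_sqdist_integral_du z + Im h * inv_sqdist_integral_dv z))) (at z)"
  unfolding level_map_def[abs_def] using assms
  by (auto intro!: derivative_eq_intros has_derivative_inv_sqdist_integral)

lemma has_derivative_inv_level_map: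
  assumes "0 < Im z"
  shows "(inv_into {z. 0 < Im z} level_map has_derivative
           (\<lambda>w. complex_of_real (Re w) + \<i> * complex_of_real
              ((Im w - Re w * inv_sqdist_integral_du z) / inv_sqdist_integral_dv z))) (at (level_map z))"
proof (rule has_derivative_inverse_strong[OF open_halfspace_Im_gt, where f = level_map and x = z])
  show "continuous_on {z. 0 < Im z} level_map"
    using has_derivative_continuous[OF has_derivative_level_map]
    by (auto intro!: continuous_at_imp_continuous_on)
  show "(\<lambda>h. complex_of_real (Re h) + \<i> * complex_of_real
           (Re h * inv_sqdist_integral_du z + Im h * inv_sqdist_integral_dv z)) \<circ>
        (\<lambda>w. complex_of_real (Re w) + \<i> * complex_of_real
           ((Im w - Re w * inv_sqdist_integral_du z) / inv_sqdist_integral_dv z)) = id"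
    using inv_sqdist_integral_dv_neg[OF assms] by (simp add: fun_eq_iff complex_eq_iff field_simps)
qed (use assms has_derivative_level_map inj_on_level_map in \<open>auto simp: inv_into_f_f\<close>)

definition boundary_tangent :: "complex \<Rightarrow> complex" where
  "boundary_tangent z = 1 - \<i> * complex_of_real (inv_sqdist_integral_du z / inv_sqdist_integral_dv z)"

lemma boundary_curve_has_vector_derivative:
  assumes s: "0 < s" and v: "0 < v_fun M s u"
  shows "(boundary_curve s has_vector_derivative boundary_tangent (boundary_curve s u)) (at u)"
proof -
  let ?H = "{z. 0 < Im z}" and ?z = "boundary_curve s u"
  have "0 < Im ?z"
    using v by (simp add: boundary_curve_def)
  have curve_eq: "\<forall>\<^sub>F u' in nhds u. boundary_curve s u' = inv_into ?H level_map (Complex u' (1 / s))"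
    using eventually_v_fun_level[OF s v]
  proof eventually_elim
    case (elim u')
    then have "level_map (boundary_curve s u') = Complex u' (1 / s)"
      by (simp add: level_map_def boundary_curve_def complex_eq_iff)
    with elim show ?case
      using inj_on_level_map by (metis boundary_curve_def complex.sel(2) inv_into_f_f mem_Collect_eq)
  qed
  have "level_map ?z = Complex u (1 / s)"
    using eventually_v_fun_level[OF s v, THEN eventually_nhds_x_imp_x]
    by (simp add: level_map_def boundary_curve_def complex_eq_iff)
  then have "((inv_into ?H level_map \<circ> (\<lambda>u'. Complex u' (1 / s))) has_derivative
      (\<lambda>h. h *\<^sub>R boundary_tangent ?z)) (at u)"
  proof -
    have "((\<lambda>u'. Complex u' (1 / s)) has_derivative complex_of_real) (at u)"
      unfolding Complex_eq by (auto intro!: derivative_eq_intros)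
    from diff_chain_at[OF this has_derivative_inv_level_map[OF \<open>0 < Im ?z\<close>,
          unfolded \<open>level_map ?z = _\<close>]]
    show ?thesis
      by (simp add: o_def boundary_tangent_def scaleR_conv_of_real algebra_simps)
  qed
  then show ?thesis
    unfolding has_vector_derivative_def[symmetric]
    using curve_eq curve_eq[THEN eventually_nhds_x_imp_x]
    by (subst has_vector_derivative_cong_ev) (auto simp: o_def)
qed

definition psi_derivative :: "real \<Rightarrow> complex \<Rightarrow> complex" where
  "psi_derivative s z = boundary_tangent z * (1 + complex_of_real s * deriv (cauchy_G M) z)"

lemma psi_fun_has_vector_derivative:
  assumes "0 < s" "0 < v_fun M s u"
  shows "(psi_fun M s has_vector_derivative psi_derivative s (boundary_curve s u)) (at u)"
proof -
  let ?z = "boundary_curve s u"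
  have "0 < Im ?z"
    using assms by (simp add: boundary_curve_def)
  then have "(H_fun M s has_field_derivative 1 + complex_of_real s * deriv (cauchy_G M) ?z) (at ?z)"
    unfolding H_fun_def[abs_def] using cauchy_G_has_field_derivative[OF \<open>0 < Im ?z\<close>]
    by (auto intro!: derivative_eq_intros simp: deriv_cauchy_G)
  moreover have "psi_fun M s = H_fun M s \<circ> boundary_curve s"
    by (simp add: fun_eq_iff psi_fun_def boundary_curve_def)
  ultimately show ?thesis
    using field_vector_diff_chain_at[OF boundary_curve_has_vector_derivative[OF assms]]
    by (simp add: psi_derivative_def)
qed

lemma psi_derivative_differentiable: "0 < Im z \<Longrightarrow> psi_derivative s differentiable (at z)"
  unfolding psi_derivative_def[abs_def] boundary_tangent_def[abs_def]
  using inv_sqdist_integral_dv_neg[of z]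
  by (intro derivative_intros inv_sqdist_integral_du_differentiable
      inv_sqdist_integral_dv_differentiable deriv_cauchy_G_differentiable) auto

lemma Im_psi_fun:
  assumes "0 < s" "0 < v_fun M s u" "inv_sqdist_integral (boundary_curve s u) = 1 / s"
  shows "Im (psi_fun M s u) = 0"
proof -
  have "Im (cauchy_G M (boundary_curve s u)) = - v_fun M s u * inv_sqdist_integral (boundary_curve s u)"
    using assms inv_sqdist_integral_eq_Im_cauchy_G[of "boundary_curve s u"]
    by (simp add: boundary_curve_def)
  then show ?thesis
    using assms by (simp add: psi_fun_def H_fun_def boundary_curve_def)
qed

lemma eventually_psi_fun_has_real_vector_derivative:
  assumes s: "0 < s" and v: "0 < v_fun M s u0"
  shows "\<forall>\<^sub>F u in nhds u0. 0 < v_fun M s u \<and>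
           (psi_fun M s has_vector_derivative psi_derivative s (boundary_curve s u)) (at u) \<and>
           Im (psi_derivative s (boundary_curve s u)) = 0"
proof -
  have level: "\<forall>\<^sub>F u in nhds u0. 0 < v_fun M s u \<and> inv_sqdist_integral (boundary_curve s u) = 1 / s"
    using eventually_v_fun_level[OF s v] .
  then have "\<forall>\<^sub>F u in nhds u0. \<forall>\<^sub>F y in nhds u. Im (psi_fun M s y) = 0"
    unfolding eventually_eventually by (rule eventually_mono) (auto intro: Im_psi_fun[OF s])
  with level show ?thesis
  proof eventually_elim
    case (elim u)
    then have "(psi_fun M s has_vector_derivative psi_derivative s (boundary_curve s u)) (at u)"
      by (intro psi_fun_has_vector_derivative[OF s]) simp
    with elim show ?case
      using has_vector_derivative_Im_eq_0 by blast
  qed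
qed

lemma psi_fun_second_derivative:
  assumes s: "0 < s" and v: "0 < v_fun M s u0"
  obtains p2 :: real where
    "\<forall>\<^sub>F u in nhds u0. 0 < v_fun M s u" "\<forall>\<^sub>F u in nhds u0. psi_fun M s differentiable (at u)"
    "((\<lambda>u. vector_derivative (psi_fun M s) (at u)) has_vector_derivative complex_of_real p2) (at u0)"
proof -
  let ?psi' = "\<lambda>u. vector_derivative (psi_fun M s) (at u)"
  note psi' = eventually_psi_fun_has_real_vector_derivative[OF s v]
  have psi'_eq: "\<forall>\<^sub>F u in nhds u0. ?psi' u = psi_derivative s (boundary_curve s u)"
    using psi' by eventually_elim (simp add: vector_derivative_at)
  have "(\<lambda>u. psi_derivative s (boundary_curve s u)) differentiable (at u0)"
    using differentiable_chain_at[of "boundary_curve s" u0 "psi_derivative s"]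
      boundary_curve_has_vector_derivative[OF s v] psi_derivative_differentiable v
    by (auto simp: o_def boundary_curve_def has_vector_derivative_def intro: differentiableI)
  then obtain p2 where "((\<lambda>u. psi_derivative s (boundary_curve s u)) has_vector_derivative p2) (at u0)"
    using vector_derivative_works by blast
  then have p2: "(?psi' has_vector_derivative p2) (at u0)"
    using psi'_eq psi'_eq[THEN eventually_nhds_x_imp_x] by (subst has_vector_derivative_cong_ev) simp_all
  have "\<forall>\<^sub>F u in nhds u0. Im (?psi' u) = 0"
    using psi' psi'_eq by eventually_elim simp
  with p2 have "p2 = complex_of_real (Re p2)"
    using has_vector_derivative_Im_eq_0 by (simp add: complex_eq_iff)
  show thesis
  proof (rule that)
    show "\<forall>\<^sub>F u in nhds u0. 0 < v_fun M s u" "\<forall>\<^sub>F u in nhds u0. psi_fun M s differentiable (at u)"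
      using psi' by (auto elim!: eventually_mono intro: differentiableI_vector)
    show "(?psi' has_vector_derivative complex_of_real (Re p2)) (at u0)"
      using p2 unfolding \<open>p2 = _\<close>[symmetric] .
  qed
qed

end

lemma has_real_derivative_deriv_affine_Re:
  fixes \<phi> :: "real \<Rightarrow> complex" and c :: real
  defines "g \<equiv> \<lambda>u. u + c * (Re (\<phi> u) - u)"
  assumes "\<forall>\<^sub>F u in nhds u0. \<phi> differentiable (at u)"
    and "((\<lambda>u. vector_derivative \<phi> (at u)) has_vector_derivative D) (at u0)"
  shows "\<forall>\<^sub>F u in nhds u0. g differentiable (at u)"
    and "(deriv g has_real_derivative c * Re D) (at u0)"
proof -
  have g': "\<forall>\<^sub>F u in nhds u0.
      (g has_real_derivative 1 + c * (Re (vector_derivative \<phi> (at u)) - 1)) (at u)"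
    using assms(2) unfolding g_def
    by eventually_elim (auto intro!: derivative_eq_intros simp: vector_derivative_works)
  then show "\<forall>\<^sub>F u in nhds u0. g differentiable (at u)"
    by eventually_elim (auto intro: differentiableI simp: has_field_derivative_def)
  have "((\<lambda>u. 1 + c * (Re (vector_derivative \<phi> (at u)) - 1)) has_real_derivative c * Re D) (at u0)"
    using assms(3) by (auto intro!: derivative_eq_intros)
  moreover have "\<forall>\<^sub>F u in nhds u0. deriv g u = 1 + c * (Re (vector_derivative \<phi> (at u)) - 1)"
    using g' by eventually_elim (rule DERIV_imp_deriv)
  ultimately show "(deriv g has_real_derivative c * Re D) (at u0)"
    by (subst DERIV_cong_ev[OF refl]) (auto simp: eq_commute)
qed

lemma f_fun_eq_psi_fun:
  assumes "\<alpha> + \<beta> \<noteq> 0"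
  shows "f_fun mu \<alpha> \<beta> = (\<lambda>u. u + (\<alpha> - \<beta>) / (\<alpha> + \<beta>) * (Re (psi_fun mu (\<alpha> + \<beta>) u) - u))"
  using assms by (simp add: fun_eq_iff f_fun_def psi_fun_def H_fun_def)

lemma f_fun_derivatives:
  assumes "\<alpha> + \<beta> \<noteq> 0"
    and "\<forall>\<^sub>F u in nhds u0. psi_fun mu (\<alpha> + \<beta>) differentiable (at u)"
    and "((\<lambda>u. vector_derivative (psi_fun mu (\<alpha> + \<beta>)) (at u)) has_vector_derivative complex_of_real p2) (at u0)"
  shows "\<forall>\<^sub>F u in nhds u0. f_fun mu \<alpha> \<beta> differentiable (at u)"
    and "(deriv (f_fun mu \<alpha> \<beta>) has_real_derivative (\<alpha> - \<beta>) / (\<alpha> + \<beta>) * p2) (at u0)"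
  using has_real_derivative_deriv_affine_Re[where c = "(\<alpha> - \<beta>) / (\<alpha> + \<beta>)", OF assms(2,3)]
  unfolding f_fun_eq_psi_fun[OF assms(1)] by simp_all

lemma brown_density_has_vector_derivative:
  assumes "\<forall>\<^sub>F u in nhds u0. 0 < v_fun mu s u"
    and "((\<lambda>u. vector_derivative (psi_fun mu s) (at u)) has_vector_derivative D) (at u0)"
  shows "((\<lambda>u. brown_density mu s (complex_of_real u)) has_vector_derivative
           D / complex_of_real (2 * pi * s)) (at u0)"
proof -
  define c where "c = complex_of_real (2 * pi * s)"
  have density_eq: "\<forall>\<^sub>F u in nhds u0.
      brown_density mu s (complex_of_real u) = vector_derivative (psi_fun mu s) (at u) / c"
    using assms(1) by eventually_elim (simp add: brown_density_def Lambda_set_def c_def)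
  with has_vector_derivative_divide[OF assms(2), of c] show ?thesis
    unfolding c_def[symmetric] using density_eq[THEN eventually_nhds_x_imp_x]
    by (subst has_vector_derivative_cong_ev[where g = "\<lambda>u. vector_derivative (psi_fun mu s) (at u) / c"])
      simp_all
qed

theorem proposition5p10:
  fixes mu :: "real measure" and \<alpha> \<beta> u0 :: real
  assumes "prob_space mu"
    and "sets mu = sets borel"
    and "\<forall>a. mu \<noteq> return borel a"
    and "(\<integral>\<^sup>+x\<in>{1..}. ennreal (ln x) \<partial>mu) < \<infinity>"
    and "\<alpha> \<ge> 0" and "\<beta> > 0"
    and "complex_of_real u0 \<in> Lambda_set mu (\<alpha> + \<beta>)"
  shows "(\<forall>\<^sub>F u in nhds u0. f_fun mu \<alpha> \<beta> differentiable (at u)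
                              \<and> psi_fun mu (\<alpha> + \<beta>) differentiable (at u))
       \<and> deriv (f_fun mu \<alpha> \<beta>) differentiable (at u0)
       \<and> (\<lambda>u. vector_derivative (psi_fun mu (\<alpha> + \<beta>)) (at u)) differentiable (at u0)
       \<and> (\<lambda>u. brown_density mu (\<alpha> + \<beta>) (complex_of_real u)) differentiable (at u0)
       \<and> complex_of_real (deriv (deriv (f_fun mu \<alpha> \<beta>)) u0)
           = complex_of_real (2 * pi * (\<alpha> - \<beta>))
             * vector_derivative (\<lambda>u. brown_density mu (\<alpha> + \<beta>) (complex_of_real u)) (at u0)
       \<and> complex_of_real (deriv (deriv (f_fun mu \<alpha> \<beta>)) u0)
           = complex_of_real ((\<alpha> - \<beta>) / (\<alpha> + \<beta>))
             * vector_derivative (\<lambda>u. vector_derivative (psi_fun mu (\<alpha> + \<beta>)) (at u)) (at u0)"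
proof -
  interpret real_distribution mu
    using assms(1,2) by (simp add: real_distribution_def real_distribution_axioms_def)
  define s where "s = \<alpha> + \<beta>"
  have "0 < s" "0 < v_fun mu s u0"
    using assms(5-7) by (simp_all add: s_def Lambda_set_def)
  then obtain p2 where v_pos: "\<forall>\<^sub>F u in nhds u0. 0 < v_fun mu s u"
    and psi': "\<forall>\<^sub>F u in nhds u0. psi_fun mu s differentiable (at u)"
    and psi'': "((\<lambda>u. vector_derivative (psi_fun mu s) (at u)) has_vector_derivative complex_of_real p2) (at u0)"
    by (rule psi_fun_second_derivative)
  note f' = f_fun_derivatives[of \<alpha> \<beta>, folded s_def, OF _ psi' psi'']
  note w' = brown_density_has_vector_derivative[OF v_pos psi'']
  show ?thesis
    unfolding s_def[symmetric]
    using eventually_conj[OF f'(1) psi'] differentiableI[OF f'(2)[unfolded has_field_derivative_def]]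
      differentiableI_vector[OF psi''] differentiableI_vector[OF w'] \<open>0 < s\<close>
    by (simp add: DERIV_imp_deriv[OF f'(2)] vector_derivative_at[OF psi''] vector_derivative_at[OF w']
        field_simps)
qed

end
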